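(* Let $\mathcal{P}=\{\mathbb{P}_n\}_{n\ge1}$ and $\mathcal{P}'=\{\mathbb{P}'_n\}_{n\ge1}$ be families of probability measures, $\mathbb{P}_n,\mathbb{P}'_n$ on $\mathbb{R}^n$. If $\mathcal{P}'$ has exponential Fisher separability and $\mathcal{P}'$ dominates $\mathcal{P}$, then $\mathcal{P}$ has exponential Fisher separability.
   Context: $\mathcal{P}'$ dominates $\mathcal{P}$ if there is a constant $C$ such that $\mathbb{P}_n(S)\le C\,\mathbb{P}'_n(S)$ for all $n$ and all measurable $S\subset\mathbb{R}^n$. A family $\{\mathbb{P}_n\}$ has exponential Fisher separability if there exist constants $a>0$, $b\in(0,1)$ such that for all $n$, if $\boldsymbol{x},\boldsymbol{y}$ are i.i.d. with law $\mathbb{P}_n$, then $(\boldsymbol{x},\boldsymbol{x})>(\boldsymbol{x},\boldsymbol{y})$ with probability at least $1-ab^n$ ($(\cdot,\cdot)$ the Euclidean inner product). *)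

theory Defs
  imports "HOL-Probability.Probability"
begin

text \<open>R^n is modelled as functions nat => real restricted to the index set {..<n}
  (the product measurable space PiM {..<n} borel, i.e. the Borel sets of R^n).\<close>

definition euclid_sp :: "nat \<Rightarrow> (nat \<Rightarrow> real) measure" where
  "euclid_sp n = PiM {..<n} (\<lambda>_. borel)"

definition ip :: "nat \<Rightarrow> (nat \<Rightarrow> real) \<Rightarrow> (nat \<Rightarrow> real) \<Rightarrow> real" where
  "ip n x y = (\<Sum>i<n. x i * y i)"

definition prob_family :: "(nat \<Rightarrow> (nat \<Rightarrow> real) measure) \<Rightarrow> bool" where
  "prob_family P \<longleftrightarrow> (\<forall>n\<ge>1. prob_space (P n) \<and> sets (P n) = sets (euclid_sp n))"

definition dominates :: "(nat \<Rightarrow> (nat \<Rightarrow> real) measure) \<Rightarrow> (nat \<Rightarrow> (nat \<Rightarrow> real) measure) \<Rightarrow> bool" where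
  "dominates P' P \<longleftrightarrow>
     (\<exists>C::real. \<forall>n\<ge>1. \<forall>S \<in> sets (P n). measure (P n) S \<le> C * measure (P' n) S)"

definition exp_fisher_sep :: "(nat \<Rightarrow> (nat \<Rightarrow> real) measure) \<Rightarrow> bool" where
  "exp_fisher_sep P \<longleftrightarrow>
     (\<exists>a::real. \<exists>b::real. a > 0 \<and> 0 < b \<and> b < 1 \<and>
        (\<forall>n\<ge>1. measure (P n \<Otimes>\<^sub>M P n)
                   {z \<in> space (P n \<Otimes>\<^sub>M P n). ip n (fst z) (snd z) < ip n (fst z) (fst z)}
                 \<ge> 1 - a * b ^ n))"

end

theory Submission
  imports Defs
begin

(* Domination with constant C passes to the product measures with constant C^2, by Tonelli.
   Applied to the complement of the event (x,x) > (x,y), whose P'-probability is at most a b^n,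
   it shows that this event fails with P-probability at most C^2 a b^n. *)

lemma emeasure_pair_measure_dominated:
  assumes sets_M: "sets M = sets M'" and sets_N: "sets N = sets N'"
    and "sigma_finite_measure N" and "sigma_finite_measure N'"
    and dom_M: "\<And>A. A \<in> sets M \<Longrightarrow> emeasure M A \<le> c * emeasure M' A"
    and dom_N: "\<And>A. A \<in> sets N \<Longrightarrow> emeasure N A \<le> d * emeasure N' A"
    and X: "X \<in> sets (M \<Otimes>\<^sub>M N)"
  shows "emeasure (M \<Otimes>\<^sub>M N) X \<le> c * d * emeasure (M' \<Otimes>\<^sub>M N') X"
proof -
  interpret N: sigma_finite_measure N by fact
  interpret N': sigma_finite_measure N' by fact
  have X': "X \<in> sets (M' \<Otimes>\<^sub>M N')"
    using X sets_pair_measure_cong[OF sets_M sets_N] by simp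
  have M_le: "M \<le> scale_measure c M'"
    using sets_M sets_eq_imp_space_eq[OF sets_M] dom_M
    by (auto simp: le_measure_iff space_scale_measure le_fun_def)
      (metis dom_M emeasure_notin_sets sets_M zero_le)
  have "emeasure (M \<Otimes>\<^sub>M N) X = (\<integral>\<^sup>+ x. emeasure N (Pair x -` X) \<partial>M)"
    by (rule N.emeasure_pair_measure_alt[OF X])
  also have "\<dots> \<le> (\<integral>\<^sup>+ x. d * emeasure N' (Pair x -` X) \<partial>M)"
    by (intro nn_integral_mono dom_N sets_Pair1[OF X])
  also have "\<dots> \<le> (\<integral>\<^sup>+ x. d * emeasure N' (Pair x -` X) \<partial>scale_measure c M')"
    using M_le sets_M by (intro nn_integral_mono_measure) simp_all
  also have "\<dots> = c * d * (\<integral>\<^sup>+ x. emeasure N' (Pair x -` X) \<partial>M')"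
    using N'.measurable_emeasure_Pair[OF X']
    by (simp add: nn_integral_scale_measure nn_integral_cmult ac_simps)
  also have "\<dots> = c * d * emeasure (M' \<Otimes>\<^sub>M N') X"
    by (simp add: N'.emeasure_pair_measure_alt[OF X'])
  finally show ?thesis .
qed

lemma prob_space_dominating_const_ge_1:
  assumes "prob_space M" "prob_space M'" "sets M = sets M'"
    and "\<And>A. A \<in> sets M \<Longrightarrow> measure M A \<le> C * measure M' A"
  shows "C \<ge> 1"
proof -
  have "measure M (space M) \<le> C * measure M' (space M)"
    by (rule assms(4)) simp
  moreover have "space M = space M'" using assms(3) by (rule sets_eq_imp_space_eq)
  ultimately have "measure M (space M) \<le> C * measure M' (space M')" by simp
  then show ?thesis
    using assms(1,2) by (simp add: prob_space.prob_space)
qed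

lemma measure_pair_measure_dominated:
  assumes "prob_space M" "prob_space M'" and sets_eq: "sets M = sets M'"
    and C: "C \<ge> 0" and dom: "\<And>A. A \<in> sets M \<Longrightarrow> measure M A \<le> C * measure M' A"
    and X: "X \<in> sets (M \<Otimes>\<^sub>M M)"
  shows "measure (M \<Otimes>\<^sub>M M) X \<le> C\<^sup>2 * measure (M' \<Otimes>\<^sub>M M') X"
proof -
  interpret M: prob_space M by fact
  interpret M': prob_space M' by fact
  interpret MM: pair_prob_space M M ..
  interpret MM': pair_prob_space M' M' ..
  have dom': "emeasure M A \<le> ennreal C * emeasure M' A" if "A \<in> sets M" for A
    using dom[OF that] C
    by (simp add: M.emeasure_eq_measure M'.emeasure_eq_measure ennreal_mult[symmetric])
  have "emeasure (M \<Otimes>\<^sub>M M) X \<le> ennreal C * ennreal C * emeasure (M' \<Otimes>\<^sub>M M') X"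
    using sets_eq dom' X M.sigma_finite_measure_axioms M'.sigma_finite_measure_axioms
    by (intro emeasure_pair_measure_dominated) auto
  then show ?thesis
    using C by (simp add: MM.P.emeasure_eq_measure MM'.P.emeasure_eq_measure
        ennreal_mult[symmetric] ennreal_le_iff power2_eq_square)
qed

definition fisher_event :: "nat \<Rightarrow> ((nat \<Rightarrow> real) \<times> (nat \<Rightarrow> real)) set" where
  "fisher_event n =
     {z \<in> space (euclid_sp n \<Otimes>\<^sub>M euclid_sp n). ip n (fst z) (snd z) < ip n (fst z) (fst z)}"

lemma
  assumes "sets M = sets (euclid_sp n)"
  shows fisher_event_eq:
      "{z \<in> space (M \<Otimes>\<^sub>M M). ip n (fst z) (snd z) < ip n (fst z) (fst z)} = fisher_event n"
    and sets_fisher_event: "fisher_event n \<in> sets (M \<Otimes>\<^sub>M M)"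
proof -
  have sets_eq: "sets (M \<Otimes>\<^sub>M M) = sets (euclid_sp n \<Otimes>\<^sub>M euclid_sp n)"
    by (rule sets_pair_measure_cong[OF assms assms])
  show "{z \<in> space (M \<Otimes>\<^sub>M M). ip n (fst z) (snd z) < ip n (fst z) (fst z)} = fisher_event n"
    unfolding fisher_event_def sets_eq_imp_space_eq[OF sets_eq] ..
  show "fisher_event n \<in> sets (M \<Otimes>\<^sub>M M)"
    unfolding sets_eq fisher_event_def ip_def euclid_sp_def by measurable
qed

lemma exp_fisher_sep_iff:
  assumes "prob_family P"
  shows "exp_fisher_sep P \<longleftrightarrow> (\<exists>a b. a > 0 \<and> 0 < b \<and> b < 1 \<and>
           (\<forall>n\<ge>1. 1 - measure (P n \<Otimes>\<^sub>M P n) (fisher_event n) \<le> a * b ^ n))"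
proof -
  have "measure (P n \<Otimes>\<^sub>M P n)
          {z \<in> space (P n \<Otimes>\<^sub>M P n). ip n (fst z) (snd z) < ip n (fst z) (fst z)}
        = measure (P n \<Otimes>\<^sub>M P n) (fisher_event n)" if "n \<ge> 1" for n
    using assms that unfolding prob_family_def by (simp add: fisher_event_eq)
  then show ?thesis
    unfolding exp_fisher_sep_def by (simp add: diff_le_eq add.commute)
qed

lemma fisher_event_failure_dominated:
  assumes "prob_space M" "prob_space M'"
    and sets_M: "sets M = sets (euclid_sp n)" and sets_M': "sets M' = sets (euclid_sp n)"
    and "C \<ge> 0" and "\<And>A. A \<in> sets M \<Longrightarrow> measure M A \<le> C * measure M' A"
  shows "1 - measure (M \<Otimes>\<^sub>M M) (fisher_event n)
           \<le> C\<^sup>2 * (1 - measure (M' \<Otimes>\<^sub>M M') (fisher_event n))"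
proof -
  interpret M: prob_space M by fact
  interpret M': prob_space M' by fact
  interpret MM: pair_prob_space M M ..
  interpret MM': pair_prob_space M' M' ..
  have sets_pair: "sets (M \<Otimes>\<^sub>M M) = sets (M' \<Otimes>\<^sub>M M')"
    using sets_M sets_M' by (intro sets_pair_measure_cong) simp_all
  define B where "B = space (M \<Otimes>\<^sub>M M) - fisher_event n"
  have B': "B = space (M' \<Otimes>\<^sub>M M') - fisher_event n"
    unfolding B_def sets_eq_imp_space_eq[OF sets_pair] ..
  have B_sets: "B \<in> sets (M \<Otimes>\<^sub>M M)"
    unfolding B_def using sets_fisher_event[OF sets_M] by auto
  have "1 - measure (M \<Otimes>\<^sub>M M) (fisher_event n) = measure (M \<Otimes>\<^sub>M M) B"
    unfolding B_def using MM.P.prob_compl[OF sets_fisher_event[OF sets_M]] by simp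
  also have "\<dots> \<le> C\<^sup>2 * measure (M' \<Otimes>\<^sub>M M') B"
    using assms(1,2,5,6) sets_M sets_M' B_sets by (intro measure_pair_measure_dominated) auto
  also have "measure (M' \<Otimes>\<^sub>M M') B = 1 - measure (M' \<Otimes>\<^sub>M M') (fisher_event n)"
    unfolding B' using MM'.P.prob_compl[OF sets_fisher_event[OF sets_M']] by simp
  finally show ?thesis .
qed

theorem theorem5:
  fixes P P' :: "nat \<Rightarrow> (nat \<Rightarrow> real) measure"
  assumes "prob_family P" and "prob_family P'"
    and "exp_fisher_sep P'" and "dominates P' P"
  shows "exp_fisher_sep P"
proof -
  have P: "prob_space (P n)" "sets (P n) = sets (euclid_sp n)"
    and P': "prob_space (P' n)" "sets (P' n) = sets (euclid_sp n)" if "n \<ge> 1" for n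
    using assms(1,2) that unfolding prob_family_def by auto
  obtain a b where ab: "a > 0" "0 < b" "b < 1"
    and sep': "\<And>n. n \<ge> 1 \<Longrightarrow> 1 - measure (P' n \<Otimes>\<^sub>M P' n) (fisher_event n) \<le> a * b ^ n"
    using assms(2,3) exp_fisher_sep_iff by blast
  obtain C where dom: "\<And>n S. n \<ge> 1 \<Longrightarrow> S \<in> sets (P n) \<Longrightarrow> measure (P n) S \<le> C * measure (P' n) S"
    using assms(4) unfolding dominates_def by blast
  have "C \<ge> 1"
    by (rule prob_space_dominating_const_ge_1[of "P 1" "P' 1"]) (simp_all add: P P' dom)
  have "1 - measure (P n \<Otimes>\<^sub>M P n) (fisher_event n) \<le> C\<^sup>2 * a * b ^ n" if "n \<ge> 1" for n
  proof -
    have "1 - measure (P n \<Otimes>\<^sub>M P n) (fisher_event n)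
            \<le> C\<^sup>2 * (1 - measure (P' n \<Otimes>\<^sub>M P' n) (fisher_event n))"
      using P[OF that] P'[OF that] dom[OF that] \<open>C \<ge> 1\<close>
      by (intro fisher_event_failure_dominated) auto
    also have "\<dots> \<le> C\<^sup>2 * (a * b ^ n)"
      using sep'[OF that] by (intro mult_left_mono) auto
    finally show ?thesis by (simp add: mult.assoc)
  qed
  moreover have "C\<^sup>2 * a > 0" using \<open>C \<ge> 1\<close> ab by simp
  ultimately show ?thesis
    using assms(1) ab exp_fisher_sep_iff by blast
qed

end
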